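(* The term rewriting system $\mathcal{R}=(\Sigma,V,\geq_s,\Delta)$ described in the context is terminating: for every term $\tau\in T[\Sigma,V]$, every sequence of rewriting steps starting from $\tau$ is finite.
   Context: $\mathbb{F}=\mathbb{GF}(2^n)$. Signature $\Sigma=\mathbb{F}\cup\{\oplus,\otimes,f_1,\dots,f_t\}$: elements of $\mathbb{F}$ are constants, $\oplus,\otimes$ binary (field addition and multiplication), $f_1,\dots,f_t$ unary symbols for affine transformations, each $f$ having an associated affine constant $c_f\in\mathbb{F}$. $V$ is a set of variables, $\Sigma\cap V=\emptyset$, and $\geq_s$ is a total order on $V\uplus\Sigma$. Terms $T[\Sigma,V]$: smallest set containing $\mathbb{F}\cup V$ and closed under $\oplus$, $\otimes$, $f_j$; $T_{\backslash\oplus}(\Sigma,V)$ = terms not using $\oplus$. A factor is a term in $\mathbb{F}\cup V$ or of the form $f_i(\tau')$ with $\tau'\in T_{\backslash\oplus}(\Sigma,V)$; a monomial is a product $\alpha_1\otimes\cdots\otimes\alpha_k$ ($k\ge1$) of nonzero factors (sums and products treated as flat sequences). Factor order $\geq_l$: $\alpha\geq_l\alpha'$ iff (i) $\alpha,\alpha'\in\mathbb{F}\cup V$ and $\alpha\geq_s\alpha'$; or (ii) $\alpha=f(\tau)$, $\alpha'=f'(\tau')$ with $f\geq_s f'$, or $f=f'$ and $\tau\geq_p\tau'$; or (iii) $\alpha=f(\tau)$ and $f\geq_s\alpha'$, or $\alpha'=f(\tau)$ and $\alpha\geq_s f$. Monomial order $\geq_p$: lexicographic comparison (w.r.t. $\geq_l$)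 of the factor sequences sorted in descending $\geq_l$-order. Rules $\Delta$ (with $\tau,\tau_1,\tau_2$ terms, $m_i$ monomials, $\alpha_i$ factors, $f$ an affine symbol with constant $c$): R1: $m_1\oplus\cdots\oplus m_k\mapsto m'_1\oplus\cdots\oplus m'_k$ where $(m'_1,\dots,m'_k)={\tt sort}_{\geq_p}(m_1,\dots,m_k)\neq(m_1,\dots,m_k)$; R2: $\alpha_1\cdots\alpha_k\mapsto\alpha'_1\cdots\alpha'_k$ where $(\alpha'_1,\dots,\alpha'_k)={\tt sort}_{\geq_l}(\alpha_1,\dots,\alpha_k)\neq(\alpha_1,\dots,\alpha_k)$; R3: $\tau\oplus\tau\mapsto0$; R4: $\tau\otimes0\mapsto0$; R5: $0\otimes\tau\mapsto0$; R6: $\tau\oplus0\mapsto\tau$; R7: $0\oplus\tau\mapsto\tau$; R8: $\tau\otimes1\mapsto\tau$; R9: $1\otimes\tau\mapsto\tau$; R10: $(\tau_1\oplus\tau_2)\otimes\tau\mapsto(\tau_1\otimes\tau)\oplus(\tau_2\otimes\tau)$; R11: $\tau\otimes(\tau_1\oplus\tau_2)\mapsto(\tau\otimes\tau_1)\oplus(\tau\otimes\tau_2)$; R12: $f(\tau_1\oplus\tau_2)\mapsto f(\tau_1)\oplus f(\tau_2)\oplus c$; R13: $f(0)\mapsto c$. A rewriting step replaces one occurrence of a subterm matching a left-hand side by the corresponding right-hand side. *)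

theory Defs
  imports Main
begin

text \<open>Terms over the signature: field constants, variables, binary addition and
multiplication, and unary affine symbols.\<close>
datatype ('c, 'v, 'f) trm =
    Cst 'c | Var 'v | Add "('c, 'v, 'f) trm" "('c, 'v, 'f) trm"
  | Mul "('c, 'v, 'f) trm" "('c, 'v, 'f) trm" | Fn 'f "('c, 'v, 'f) trm"

text \<open>The symbols of V disjoint-union Sigma, on which the total order is given.\<close>
datatype ('c, 'v, 'f) sym = SCst 'c | SVar 'v | SAdd | SMul | SFn 'f

fun sym_of :: "('c, 'v, 'f) trm \<Rightarrow> ('c, 'v, 'f) sym" where
  "sym_of (Cst c) = SCst c"
| "sym_of (Var v) = SVar v"
| "sym_of (Add _ _) = SAdd"
| "sym_of (Mul _ _) = SMul"
| "sym_of (Fn f _) = SFn f"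

fun is_atom :: "('c, 'v, 'f) trm \<Rightarrow> bool" where
  "is_atom (Cst _) = True"
| "is_atom (Var _) = True"
| "is_atom _ = False"

text \<open>Flat views of sums and products (sums/products are flat sequences).\<close>
fun sum_leaves :: "('c, 'v, 'f) trm \<Rightarrow> ('c, 'v, 'f) trm list" where
  "sum_leaves (Add a b) = sum_leaves a @ sum_leaves b"
| "sum_leaves t = [t]"

fun prod_leaves :: "('c, 'v, 'f) trm \<Rightarrow> ('c, 'v, 'f) trm list" where
  "prod_leaves (Mul a b) = prod_leaves a @ prod_leaves b"
| "prod_leaves t = [t]"

fun mk_add :: "('c::zero, 'v, 'f) trm list \<Rightarrow> ('c, 'v, 'f) trm" where
  "mk_add [] = Cst 0"
| "mk_add [x] = x"
| "mk_add (x # xs) = Add x (mk_add xs)"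

fun mk_mul :: "('c::one, 'v, 'f) trm list \<Rightarrow> ('c, 'v, 'f) trm" where
  "mk_mul [] = Cst 1"
| "mk_mul [x] = x"
| "mk_mul (x # xs) = Mul x (mk_mul xs)"

fun no_add :: "('c, 'v, 'f) trm \<Rightarrow> bool" where
  "no_add (Cst _) = True"
| "no_add (Var _) = True"
| "no_add (Add _ _) = False"
| "no_add (Mul a b) = (no_add a \<and> no_add b)"
| "no_add (Fn _ t) = no_add t"

fun is_factor :: "('c, 'v, 'f) trm \<Rightarrow> bool" where
  "is_factor (Cst _) = True"
| "is_factor (Var _) = True"
| "is_factor (Fn _ t) = no_add t"
| "is_factor _ = False"

definition is_monomial :: "('c::zero, 'v, 'f) trm \<Rightarrow> bool" where
  "is_monomial t \<longleftrightarrow> (\<forall>a \<in> set (prod_leaves t). is_factor a \<and> a \<noteq> Cst 0)"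

fun ins_by :: "('a \<Rightarrow> 'a \<Rightarrow> bool) \<Rightarrow> 'a \<Rightarrow> 'a list \<Rightarrow> 'a list" where
  "ins_by ge x [] = [x]"
| "ins_by ge x (y # ys) = (if ge x y then x # y # ys else y # ins_by ge x ys)"

definition sort_by :: "('a \<Rightarrow> 'a \<Rightarrow> bool) \<Rightarrow> 'a list \<Rightarrow> 'a list" where
  "sort_by ge xs = foldr (ins_by ge) xs []"

fun lex_ge :: "('a \<Rightarrow> 'a \<Rightarrow> bool) \<Rightarrow> 'a list \<Rightarrow> 'a list \<Rightarrow> bool" where
  "lex_ge ge xs [] = True"
| "lex_ge ge [] (y # ys) = False"
| "lex_ge ge (x # xs) (y # ys) =
     ((ge x y \<and> \<not> ge y x) \<or> (ge x y \<and> ge y x \<and> lex_ge ge xs ys))"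

text \<open>The factor order (with a fuel argument to make the mutual recursion with
the monomial order primitive; sufficient fuel is supplied below).\<close>
primrec gel_fuel :: "('c, 'v, 'f) sym rel \<Rightarrow> nat \<Rightarrow> ('c, 'v, 'f) trm \<Rightarrow> ('c, 'v, 'f) trm \<Rightarrow> bool" where
  "gel_fuel so 0 a b = False"
| "gel_fuel so (Suc n) a b =
    (case a of
       Fn f t \<Rightarrow> (case b of
           Fn g u \<Rightarrow> (f \<noteq> g \<and> (SFn f, SFn g) \<in> so) \<or>
                     (f = g \<and> lex_ge (gel_fuel so n) (sort_by (gel_fuel so n) (prod_leaves t))
                                                   (sort_by (gel_fuel so n) (prod_leaves u)))
         | _ \<Rightarrow> is_atom b \<and> (SFn f, sym_of b) \<in> so)
     | _ \<Rightarrow> is_atom a \<and> (case b of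
           Fn g u \<Rightarrow> (sym_of a, SFn g) \<in> so
         | _ \<Rightarrow> is_atom b \<and> (sym_of a, sym_of b) \<in> so))"

definition ge_l :: "('c, 'v, 'f) sym rel \<Rightarrow> ('c, 'v, 'f) trm \<Rightarrow> ('c, 'v, 'f) trm \<Rightarrow> bool" where
  "ge_l so a b = gel_fuel so (size a + size b) a b"

definition ge_p :: "('c, 'v, 'f) sym rel \<Rightarrow> ('c, 'v, 'f) trm \<Rightarrow> ('c, 'v, 'f) trm \<Rightarrow> bool" where
  "ge_p so m m' = lex_ge (ge_l so) (sort_by (ge_l so) (prod_leaves m))
                                   (sort_by (ge_l so) (prod_leaves m'))"

inductive root_step :: "('c::field, 'v, 'f) sym rel \<Rightarrow> ('f \<Rightarrow> 'c) \<Rightarrow>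
    ('c, 'v, 'f) trm \<Rightarrow> ('c, 'v, 'f) trm \<Rightarrow> bool" for so cf where
  R1: "\<forall>m \<in> set (sum_leaves t). is_monomial m \<Longrightarrow>
       sort_by (ge_p so) (sum_leaves t) \<noteq> sum_leaves t \<Longrightarrow>
       root_step so cf t (mk_add (sort_by (ge_p so) (sum_leaves t)))"
| R2: "\<forall>a \<in> set (prod_leaves t). is_factor a \<Longrightarrow>
       sort_by (ge_l so) (prod_leaves t) \<noteq> prod_leaves t \<Longrightarrow>
       root_step so cf t (mk_mul (sort_by (ge_l so) (prod_leaves t)))"
| R3: "root_step so cf (Add t t) (Cst 0)"
| R4: "root_step so cf (Mul t (Cst 0)) (Cst 0)"
| R5: "root_step so cf (Mul (Cst 0) t) (Cst 0)"
| R6: "root_step so cf (Add t (Cst 0)) t"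
| R7: "root_step so cf (Add (Cst 0) t) t"
| R8: "root_step so cf (Mul t (Cst 1)) t"
| R9: "root_step so cf (Mul (Cst 1) t) t"
| R10: "root_step so cf (Mul (Add t1 t2) t) (Add (Mul t1 t) (Mul t2 t))"
| R11: "root_step so cf (Mul t (Add t1 t2)) (Add (Mul t t1) (Mul t t2))"
| R12: "root_step so cf (Fn f (Add t1 t2)) (Add (Add (Fn f t1) (Fn f t2)) (Cst (cf f)))"
| R13: "root_step so cf (Fn f (Cst 0)) (Cst (cf f))"

inductive ctx_step :: "('c::field, 'v, 'f) sym rel \<Rightarrow> ('f \<Rightarrow> 'c) \<Rightarrow>
    ('c, 'v, 'f) trm \<Rightarrow> ('c, 'v, 'f) trm \<Rightarrow> bool" for so cf where
  root: "root_step so cf s t \<Longrightarrow> ctx_step so cf s t"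
| add1: "ctx_step so cf s t \<Longrightarrow> ctx_step so cf (Add s u) (Add t u)"
| add2: "ctx_step so cf s t \<Longrightarrow> ctx_step so cf (Add u s) (Add u t)"
| mul1: "ctx_step so cf s t \<Longrightarrow> ctx_step so cf (Mul s u) (Mul t u)"
| mul2: "ctx_step so cf s t \<Longrightarrow> ctx_step so cf (Mul u s) (Mul u t)"
| fn: "ctx_step so cf s t \<Longrightarrow> ctx_step so cf (Fn f s) (Fn f t)"

text \<open>Equality modulo associativity of addition and multiplication
(sums and products are flat sequences).\<close>
inductive aeq :: "('c, 'v, 'f) trm \<Rightarrow> ('c, 'v, 'f) trm \<Rightarrow> bool" where
  refl: "aeq t t"
| sym: "aeq s t \<Longrightarrow> aeq t s"
| trans: "aeq s t \<Longrightarrow> aeq t u \<Longrightarrow> aeq s u"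
| assoc_add: "aeq (Add (Add a b) c) (Add a (Add b c))"
| assoc_mul: "aeq (Mul (Mul a b) c) (Mul a (Mul b c))"
| cong_add: "aeq a a' \<Longrightarrow> aeq b b' \<Longrightarrow> aeq (Add a b) (Add a' b')"
| cong_mul: "aeq a a' \<Longrightarrow> aeq b b' \<Longrightarrow> aeq (Mul a b) (Mul a' b')"
| cong_fn: "aeq a a' \<Longrightarrow> aeq (Fn f a) (Fn f a')"

text \<open>One rewriting step of R, on flat terms (i.e. modulo associativity).\<close>
definition rstep :: "('c::field, 'v, 'f) sym rel \<Rightarrow> ('f \<Rightarrow> 'c) \<Rightarrow>
    ('c, 'v, 'f) trm \<Rightarrow> ('c, 'v, 'f) trm \<Rightarrow> bool" where
  "rstep so cf s t \<longleftrightarrow> (\<exists>s' t'. aeq s s' \<and> ctx_step so cf s' t' \<and> aeq t' t)"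

end

theory Submission
  imports Defs "HOL-Library.Multiset_Order"
begin

text \<open>
  Termination is shown by a lexicographic combination of two measures, both invariant under
  associativity. The first, \<open>weight\<close>, interprets constants and variables as 3, sums as
  \<open>a + b + 1\<close>, products as \<open>a * b\<close> and affine symbols as \<open>2 ^ a\<close>; the rules R3--R13 decrease
  it strictly, while the sorting rules R1 and R2 only permute summands or factors and keep it.

  For the sorting rules, every inversion among the summands (factors) of a flat sum (product)
  is recorded, in a multiset of naturals, by the nesting depth of that node. Since the factor
  and monomial orders are total preorders, sorting a node at depth \<open>d\<close> removes all of its
  inversions; the entries of its descendants are merely permuted, and only the inversion counts
  of its ancestors, which sit at depths below \<open>d\<close>, can change. So the multiset decreases in the
  multiset extension of \<open><\<close>.
\<close>

section \<open>Total preorders, insertion sort and lexicographic comparison\<close>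

definition total_preorder_on :: "'a set \<Rightarrow> ('a \<Rightarrow> 'a \<Rightarrow> bool) \<Rightarrow> bool" where
  "total_preorder_on A ge \<longleftrightarrow> (\<forall>x\<in>A. \<forall>y\<in>A. ge x y \<or> ge y x) \<and> transp_on A ge"

lemma total_preorder_on_subset: "total_preorder_on B ge \<Longrightarrow> A \<subseteq> B \<Longrightarrow> total_preorder_on A ge"
  unfolding total_preorder_on_def transp_on_def by blast

lemma total_preorder_on_inv_image:
  "total_preorder_on (g ` A) ge \<Longrightarrow> total_preorder_on A (\<lambda>a b. ge (g a) (g b))"
  unfolding total_preorder_on_def transp_on_def by blast

lemma total_preorder_on_lexicographic:
  assumes R: "linear_order_on UNIV R" and Q: "total_preorder_on (g ` A) Q"
    and ge: "\<And>a b. a \<in> A \<Longrightarrow> b \<in> A \<Longrightarrow>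
      ge a b \<longleftrightarrow> (f a \<noteq> f b \<and> (f a, f b) \<in> R) \<or> (f a = f b \<and> Q (g a) (g b))"
  shows "total_preorder_on A ge"
proof -
  have tot: "(x, y) \<in> R \<or> (y, x) \<in> R" if "x \<noteq> y" for x y
    using R that by (auto simp: linear_order_on_def total_on_def)
  have trn: "(x, z) \<in> R" if "(x, y) \<in> R" "(y, z) \<in> R" for x y z
    using R that by (auto simp: linear_order_on_def partial_order_on_def preorder_on_def dest: transD)
  have asym: "x = y" if "(x, y) \<in> R" "(y, x) \<in> R" for x y
    using R that by (auto simp: linear_order_on_def partial_order_on_def dest: antisymD)
  have "ge a b \<or> ge b a" if "a \<in> A" "b \<in> A" for a b
    using tot[of "f a" "f b"] Q that unfolding ge[OF that] ge[OF that(2,1)]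
    by (auto simp: total_preorder_on_def)
  moreover have "ge a c" if A: "a \<in> A" "b \<in> A" "c \<in> A" and "ge a b" "ge b c" for a b c
  proof -
    have ab: "(f a \<noteq> f b \<and> (f a, f b) \<in> R) \<or> (f a = f b \<and> Q (g a) (g b))"
      using ge[OF A(1,2)] \<open>ge a b\<close> by blast
    have bc: "(f b \<noteq> f c \<and> (f b, f c) \<in> R) \<or> (f b = f c \<and> Q (g b) (g c))"
      using ge[OF A(2,3)] \<open>ge b c\<close> by blast
    have "Q (g a) (g b) \<Longrightarrow> Q (g b) (g c) \<Longrightarrow> Q (g a) (g c)"
      using Q A unfolding total_preorder_on_def transp_on_def by blast
    then show ?thesis
      unfolding ge[OF A(1,3)] using ab bc trn asym by metis
  qed
  ultimately show ?thesis unfolding total_preorder_on_def transp_on_def by blast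
qed

lemma sort_by_Nil [simp]: "sort_by ge [] = []"
  and sort_by_Cons [simp]: "sort_by ge (x # xs) = ins_by ge x (sort_by ge xs)"
  by (simp_all add: sort_by_def)

lemma mset_ins_by [simp]: "mset (ins_by ge x ys) = add_mset x (mset ys)"
  by (induction ys) auto

lemma set_ins_by [simp]: "set (ins_by ge x ys) = insert x (set ys)"
  by (induction ys) auto

lemma mset_sort_by [simp]: "mset (sort_by ge xs) = mset xs"
  by (induction xs) auto

lemma set_sort_by [simp]: "set (sort_by ge xs) = set xs"
  by (induction xs) auto

lemma sort_by_map:
  assumes "\<And>x y. ge (f x) (f y) = ge' x y"
  shows "sort_by ge (map f xs) = map f (sort_by ge' xs)"
proof -
  have "ins_by ge (f x) (map f ys) = map f (ins_by ge' x ys)" for x ys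
    by (induction ys) (auto simp: assms)
  then show ?thesis by (induction xs) auto
qed

lemma sort_by_cong:
  assumes "\<And>x y. x \<in> set xs \<Longrightarrow> y \<in> set xs \<Longrightarrow> ge x y = ge' x y"
  shows "sort_by ge xs = sort_by ge' xs"
  using assms
proof (induction xs)
  case (Cons x xs)
  have "ins_by ge x ys = ins_by ge' x ys" if "set ys \<subseteq> set (x # xs)" for ys
    using that by (induction ys) (auto simp: Cons.prems)
  from this[of "sort_by ge' xs"] show ?case using Cons by (simp add: subset_insertI)
qed simp

lemma sort_by_length_ge_2: "sort_by ge xs \<noteq> xs \<Longrightarrow> 2 \<le> length xs"
  by (cases xs rule: remdups_adj.cases) auto

lemma sorted_wrt_ins_by:
  assumes "total_preorder_on (insert x (set ys)) ge" and "sorted_wrt ge ys"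
  shows "sorted_wrt ge (ins_by ge x ys)"
  using assms
proof (induction ys)
  case (Cons y ys)
  have tot: "ge x y \<or> ge y x" and trn: "transp_on (insert x (set (y # ys))) ge"
    using Cons.prems(1) by (auto simp: total_preorder_on_def)
  show ?case
  proof (cases "ge x y")
    case True
    then have "\<forall>z\<in>set ys. ge x z"
      using Cons.prems(2) trn by (auto simp: transp_on_def)
    then show ?thesis using True Cons.prems(2) by simp
  next
    case False
    have "sorted_wrt ge (ins_by ge x ys)"
      using Cons total_preorder_on_subset[of _ ge "insert x (set ys)"] by auto
    moreover have "\<forall>z\<in>set (ins_by ge x ys). ge y z"
      using False tot Cons.prems(2) by auto
    ultimately show ?thesis using False by simp
  qed
qed simp

lemma sorted_wrt_sort_by: "total_preorder_on (set xs) ge \<Longrightarrow> sorted_wrt ge (sort_by ge xs)"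
proof (induction xs)
  case (Cons x xs)
  then show ?case
    using sorted_wrt_ins_by[of x "sort_by ge xs" ge] total_preorder_on_subset[of "set (x # xs)" ge]
    by auto
qed simp

lemma lex_ge_cong:
  "(\<And>x y. x \<in> set xs \<Longrightarrow> y \<in> set ys \<Longrightarrow> ge x y = ge' x y \<and> ge y x = ge' y x) \<Longrightarrow>
   lex_ge ge xs ys = lex_ge ge' xs ys"
  by (induction ge xs ys rule: lex_ge.induct) auto

lemma lex_ge_map:
  "(\<And>x y. ge (f x) (f y) = ge' x y) \<Longrightarrow> lex_ge ge (map f xs) (map f ys) = lex_ge ge' xs ys"
  by (induction ge' xs ys rule: lex_ge.induct) auto

lemma lex_ge_sort_by_cong:
  assumes "\<And>x y. x \<in> set xs \<union> set ys \<Longrightarrow> y \<in> set xs \<union> set ys \<Longrightarrow> ge x y = ge' x y"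
  shows "lex_ge ge (sort_by ge xs) (sort_by ge ys) = lex_ge ge' (sort_by ge' xs) (sort_by ge' ys)"
proof -
  have "sort_by ge xs = sort_by ge' xs" "sort_by ge ys = sort_by ge' ys"
    by (rule sort_by_cong; use assms in blast)+
  moreover have "lex_ge ge (sort_by ge' xs) (sort_by ge' ys) = lex_ge ge' (sort_by ge' xs) (sort_by ge' ys)"
    by (rule lex_ge_cong) (use assms in auto)
  ultimately show ?thesis by simp
qed

lemma total_preorder_on_lists:
  assumes "total_preorder_on A ge"
  shows "total_preorder_on (lists A) (lex_ge ge)"
proof -
  have tot: "lex_ge ge xs ys \<or> lex_ge ge ys xs" if "xs \<in> lists A" "ys \<in> lists A" for xs ys
    using that assms by (induction ge xs ys rule: lex_ge.induct) (auto simp: total_preorder_on_def)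
  have trn: "lex_ge ge xs zs"
    if "xs \<in> lists A" "ys \<in> lists A" "zs \<in> lists A" "lex_ge ge xs ys" "lex_ge ge ys zs" for xs ys zs
    using that
  proof (induction xs arbitrary: ys zs rule: list.induct)
    case (Cons x xs)
    show ?case
    proof (cases zs)
      case zs: (Cons z zs')
      obtain y ys' where ys: "ys = y # ys'" using Cons.prems zs by (cases ys) auto
      have A: "x \<in> A" "y \<in> A" "z \<in> A" using Cons.prems ys zs by auto
      have trn: "ge a b \<Longrightarrow> ge b c \<Longrightarrow> ge a c" if "a \<in> A" "b \<in> A" "c \<in> A" for a b c
        using assms that unfolding total_preorder_on_def transp_on_def by blast
      have "lex_ge ge xs zs'" if "lex_ge ge xs ys'" "lex_ge ge ys' zs'"
        using Cons.IH[of ys' zs'] that Cons.prems ys zs by auto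
      then show ?thesis
        using Cons.prems trn[OF A(1-3)] trn[OF A(2,3,1)] trn[OF A(3,1,2)] unfolding ys zs by auto
    qed simp
  qed (auto elim: lex_ge.elims)
  show ?thesis
    unfolding total_preorder_on_def transp_on_def using tot trn by meson
qed

fun inversions :: "('a \<Rightarrow> 'a \<Rightarrow> bool) \<Rightarrow> 'a list \<Rightarrow> nat" where
  "inversions ge [] = 0"
| "inversions ge (x # xs) = length (filter (\<lambda>y. ge y x \<and> \<not> ge x y) xs) + inversions ge xs"

definition cross_inversions :: "('a \<Rightarrow> 'a \<Rightarrow> bool) \<Rightarrow> 'a list \<Rightarrow> 'a list \<Rightarrow> nat" where
  "cross_inversions ge xs ys = (\<Sum>x\<leftarrow>xs. length (filter (\<lambda>y. ge y x \<and> \<not> ge x y) ys))"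

lemma inversions_append:
  "inversions ge (xs @ ys) = inversions ge xs + inversions ge ys + cross_inversions ge xs ys"
  by (induction xs) (auto simp: cross_inversions_def)

lemma sum_list_map_perm:
  fixes f :: "'a \<Rightarrow> 'b::comm_monoid_add"
  assumes "mset xs = mset ys"
  shows "sum_list (map f xs) = sum_list (map f ys)"
proof -
  have "sum_list (map f xs) = sum_mset (mset (map f xs))" by (rule sum_mset_sum_list[symmetric])
  also have "\<dots> = sum_mset (mset (map f ys))" using assms by simp
  also have "\<dots> = sum_list (map f ys)" by (rule sum_mset_sum_list)
  finally show ?thesis .
qed

lemma cross_inversions_perm:
  assumes "mset xs = mset xs'" and "mset ys = mset ys'"
  shows "cross_inversions ge xs ys = cross_inversions ge xs' ys'"
proof -
  have "length (filter P ys) = length (filter P ys')" for P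
    by (simp only: flip: size_mset) (simp add: assms(2))
  then show ?thesis
    unfolding cross_inversions_def using sum_list_map_perm[OF assms(1)] by simp
qed

lemma inversions_map:
  "(\<And>x y. ge (f x) (f y) = ge' x y) \<Longrightarrow> inversions ge (map f xs) = inversions ge' xs"
  by (induction xs) (auto simp: filter_map o_def)

lemma inversions_sorted_wrt: "sorted_wrt ge xs \<Longrightarrow> inversions ge xs = 0"
  by (induction xs) (auto simp: filter_empty_conv)

lemma sort_by_eq_if_no_inversions:
  "total_preorder_on (set xs) ge \<Longrightarrow> inversions ge xs = 0 \<Longrightarrow> sort_by ge xs = xs"
proof (induction xs)
  case (Cons x xs)
  have "sort_by ge xs = xs"
    using Cons total_preorder_on_subset[of "set (x # xs)" ge "set xs"] by auto
  moreover have "ge x y" if "xs = y # ys" for y ys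
  proof -
    have "\<not> (ge y x \<and> \<not> ge x y)"
      using Cons.prems(2) that by (simp split: if_splits)
    moreover have "ge x y \<or> ge y x"
      using Cons.prems(1) that unfolding total_preorder_on_def by simp
    ultimately show ?thesis by blast
  qed
  ultimately show ?case by (cases xs) auto
qed simp

lemma inversions_sort_by_less:
  assumes "total_preorder_on (set xs) ge" and "sort_by ge xs \<noteq> xs"
  shows "inversions ge (sort_by ge xs) < inversions ge xs"
proof -
  have "inversions ge xs \<noteq> 0"
    using assms sort_by_eq_if_no_inversions by blast
  moreover have "inversions ge (sort_by ge xs) = 0"
    by (rule inversions_sorted_wrt[OF sorted_wrt_sort_by[OF assms(1)]])
  ultimately show ?thesis by simp
qed

fun is_add :: "('c, 'v, 'f) trm \<Rightarrow> bool" where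
  "is_add (Add _ _) = True"
| "is_add _ = False"

fun is_mul :: "('c, 'v, 'f) trm \<Rightarrow> bool" where
  "is_mul (Mul _ _) = True"
| "is_mul _ = False"

lemma sum_leaves_non_add: "\<not> is_add t \<Longrightarrow> sum_leaves t = [t]"
  by (cases t) auto

lemma prod_leaves_non_mul: "\<not> is_mul t \<Longrightarrow> prod_leaves t = [t]"
  by (cases t) auto

lemma is_add_if_long_sum_leaves: "2 \<le> length (sum_leaves t) \<Longrightarrow> is_add t"
  using sum_leaves_non_add by force

lemma is_mul_if_long_prod_leaves: "2 \<le> length (prod_leaves t) \<Longrightarrow> is_mul t"
  using prod_leaves_non_mul by force

lemma non_add_sum_leaf: "l \<in> set (sum_leaves t) \<Longrightarrow> \<not> is_add l"
  by (induction t rule: sum_leaves.induct) auto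

lemma non_mul_prod_leaf: "l \<in> set (prod_leaves t) \<Longrightarrow> \<not> is_mul l"
  by (induction t rule: prod_leaves.induct) auto

lemma sum_leaves_mk_add:
  "xs \<noteq> [] \<Longrightarrow> \<forall>x\<in>set xs. \<not> is_add x \<Longrightarrow> sum_leaves (mk_add xs) = xs"
  by (induction xs rule: mk_add.induct) (auto simp: sum_leaves_non_add)

lemma prod_leaves_mk_mul:
  "xs \<noteq> [] \<Longrightarrow> \<forall>x\<in>set xs. \<not> is_mul x \<Longrightarrow> prod_leaves (mk_mul xs) = xs"
  by (induction xs rule: mk_mul.induct) (auto simp: prod_leaves_non_mul)

lemma size_sum_leaf: "l \<in> set (sum_leaves t) \<Longrightarrow> size l \<le> size t"
  by (induction t rule: sum_leaves.induct) fastforce+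

lemma size_prod_leaf: "l \<in> set (prod_leaves t) \<Longrightarrow> size l \<le> size t"
  by (induction t rule: prod_leaves.induct) fastforce+

lemma factor_prod_leaf: "no_add t \<Longrightarrow> l \<in> set (prod_leaves t) \<Longrightarrow> is_factor l"
  by (induction t rule: prod_leaves.induct) auto

fun radd :: "('c, 'v, 'f) trm \<Rightarrow> ('c, 'v, 'f) trm \<Rightarrow> ('c, 'v, 'f) trm" where
  "radd (Add x y) z = Add x (radd y z)"
| "radd x z = Add x z"

fun rmul :: "('c, 'v, 'f) trm \<Rightarrow> ('c, 'v, 'f) trm \<Rightarrow> ('c, 'v, 'f) trm" where
  "rmul (Mul x y) z = Mul x (rmul y z)"
| "rmul x z = Mul x z"

fun flat :: "('c, 'v, 'f) trm \<Rightarrow> ('c, 'v, 'f) trm" where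
  "flat (Add a b) = radd (flat a) (flat b)"
| "flat (Mul a b) = rmul (flat a) (flat b)"
| "flat (Fn f t) = Fn f (flat t)"
| "flat t = t"

lemma radd_assoc: "radd (radd a b) c = radd a (radd b c)"
  by (induction a b rule: radd.induct) auto

lemma rmul_assoc: "rmul (rmul a b) c = rmul a (rmul b c)"
  by (induction a b rule: rmul.induct) auto

lemma flat_aeq: "aeq s t \<Longrightarrow> flat s = flat t"
  by (induction rule: aeq.induct) (auto simp: radd_assoc rmul_assoc)

lemma radd_is_add: "is_add (radd x z) \<and> \<not> is_mul (radd x z)"
  by (induction x z rule: radd.induct) auto

lemma rmul_is_mul: "is_mul (rmul x z) \<and> \<not> is_add (rmul x z)"
  by (induction x z rule: rmul.induct) auto

lemma is_add_flat [simp]: "is_add (flat t) = is_add t"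
  and is_mul_flat [simp]: "is_mul (flat t) = is_mul t"
  by (cases t; simp add: radd_is_add rmul_is_mul)+

lemma sum_leaves_radd: "sum_leaves (radd x z) = sum_leaves x @ sum_leaves z"
  by (induction x z rule: radd.induct) auto

lemma prod_leaves_rmul: "prod_leaves (rmul x z) = prod_leaves x @ prod_leaves z"
  by (induction x z rule: rmul.induct) auto

lemma sum_leaves_flat: "sum_leaves (flat t) = map flat (sum_leaves t)"
  by (induction t) (auto simp: sum_leaves_radd sum_leaves_non_add rmul_is_mul)

lemma prod_leaves_flat: "prod_leaves (flat t) = map flat (prod_leaves t)"
  by (induction t) (auto simp: prod_leaves_rmul prod_leaves_non_mul radd_is_add)

lemma size_radd: "size (radd x z) = size x + size z + 1"
  by (induction x z rule: radd.induct) auto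

lemma size_rmul: "size (rmul x z) = size x + size z + 1"
  by (induction x z rule: rmul.induct) auto

lemma size_flat [simp]: "size (flat t) = size t"
  by (induction t) (simp_all add: size_radd size_rmul)

section \<open>The factor and monomial orders\<close>

fun fn_depth :: "('c, 'v, 'f) trm \<Rightarrow> nat" where
  "fn_depth (Fn _ t) = Suc (fn_depth t)"
| "fn_depth (Add a b) = max (fn_depth a) (fn_depth b)"
| "fn_depth (Mul a b) = max (fn_depth a) (fn_depth b)"
| "fn_depth _ = 0"

lemma fn_depth_less_size: "fn_depth t < size t"
  by (induction t) auto

lemma fn_depth_prod_leaf: "l \<in> set (prod_leaves t) \<Longrightarrow> fn_depth l \<le> fn_depth t"
  by (induction t rule: prod_leaves.induct) auto

lemma gel_fuel_sufficient:
  "fn_depth a < n \<Longrightarrow> fn_depth b < n \<Longrightarrow> n \<le> m \<Longrightarrow> gel_fuel so m a b = gel_fuel so n a b"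
proof (induction n arbitrary: m a b)
  case (Suc k)
  then obtain k' where m: "m = Suc k'" and "k \<le> k'" by (cases m) auto
  show ?case
  proof (cases "\<exists>f t g u. a = Fn f t \<and> b = Fn g u")
    case True
    then obtain f t g u where ab: "a = Fn f t" "b = Fn g u" by blast
    let ?L = "set (prod_leaves t) \<union> set (prod_leaves u)"
    have "gel_fuel so k' x y = gel_fuel so k x y" if "x \<in> ?L" "y \<in> ?L" for x y
    proof -
      have "fn_depth x < k" "fn_depth y < k"
        using that fn_depth_prod_leaf[of _ t] fn_depth_prod_leaf[of _ u] Suc.prems ab by fastforce+
      then show ?thesis using Suc.IH \<open>k \<le> k'\<close> by blast
    qed
    then have "lex_ge (gel_fuel so k') (sort_by (gel_fuel so k') (prod_leaves t))
          (sort_by (gel_fuel so k') (prod_leaves u)) =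
        lex_ge (gel_fuel so k) (sort_by (gel_fuel so k) (prod_leaves t))
          (sort_by (gel_fuel so k) (prod_leaves u))"
      by (rule lex_ge_sort_by_cong)
    then show ?thesis unfolding m ab by simp
  next
    case False
    then show ?thesis unfolding m by (cases a; cases b) auto
  qed
qed simp

lemma ge_l_eq_gel_fuel:
  assumes "fn_depth a < n" and "fn_depth b < n"
  shows "ge_l so a b = gel_fuel so n a b"
proof -
  let ?k = "min n (size a + size b)"
  have "fn_depth a < ?k" "fn_depth b < ?k"
    using assms fn_depth_less_size[of a] fn_depth_less_size[of b] by auto
  then have "gel_fuel so (size a + size b) a b = gel_fuel so ?k a b"
    and "gel_fuel so n a b = gel_fuel so ?k a b"
    by (simp_all add: gel_fuel_sufficient)
  then show ?thesis by (simp add: ge_l_def)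
qed

fun sorted_args :: "('c, 'v, 'f) sym rel \<Rightarrow> ('c, 'v, 'f) trm \<Rightarrow> ('c, 'v, 'f) trm list" where
  "sorted_args so (Fn _ t) = sort_by (ge_l so) (prod_leaves t)"
| "sorted_args so _ = []"

lemma ge_l_factor_iff:
  assumes "refl so" and "is_factor a" and "is_factor b"
  shows "ge_l so a b \<longleftrightarrow> (sym_of a \<noteq> sym_of b \<and> (sym_of a, sym_of b) \<in> so) \<or>
    (sym_of a = sym_of b \<and> lex_ge (ge_l so) (sorted_args so a) (sorted_args so b))"
proof -
  define m where "m = max (fn_depth a) (fn_depth b)"
  have fuel: "ge_l so a b = gel_fuel so (Suc m) a b"
    by (rule ge_l_eq_gel_fuel) (auto simp: m_def)
  have refl: "(x, x) \<in> so" for x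
    using assms(1) by (simp add: refl_on_def)
  show ?thesis
  proof (cases "\<exists>f t g u. a = Fn f t \<and> b = Fn g u")
    case True
    then obtain f t g u where ab: "a = Fn f t" "b = Fn g u" by blast
    let ?L = "set (prod_leaves t) \<union> set (prod_leaves u)"
    have "gel_fuel so m x y = ge_l so x y" if "x \<in> ?L" "y \<in> ?L" for x y
      using that fn_depth_prod_leaf[of _ t] fn_depth_prod_leaf[of _ u] ab
      by (intro ge_l_eq_gel_fuel[symmetric]) (fastforce simp: m_def)+
    then have "lex_ge (gel_fuel so m) (sort_by (gel_fuel so m) (prod_leaves t))
          (sort_by (gel_fuel so m) (prod_leaves u)) =
        lex_ge (ge_l so) (sort_by (ge_l so) (prod_leaves t)) (sort_by (ge_l so) (prod_leaves u))"
      by (rule lex_ge_sort_by_cong)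
    then show ?thesis unfolding fuel unfolding ab by simp
  next
    case False
    with assms(2,3) show ?thesis unfolding fuel by (cases a; cases b) (auto simp: refl)
  qed
qed

lemma ge_l_total_preorder_on_factors:
  fixes so :: "('c, 'v, 'f) sym rel"
  assumes lin: "linear_order_on UNIV so"
  shows "total_preorder_on {a :: ('c, 'v, 'f) trm. is_factor a} (ge_l so)"
proof -
  have refl: "refl so"
    using lin by (simp add: linear_order_on_def partial_order_on_def preorder_on_def)
  have bounded: "total_preorder_on {a :: ('c, 'v, 'f) trm. is_factor a \<and> fn_depth a < k} (ge_l so)" for k
  proof (induction k)
    case 0
    show ?case by (simp add: total_preorder_on_def transp_on_def)
  next
    case (Suc k)
    let ?F = "{a :: ('c, 'v, 'f) trm. is_factor a \<and> fn_depth a < Suc k}"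
    have "sorted_args so ` ?F \<subseteq> lists {a. is_factor a \<and> fn_depth a < k}"
    proof
      fix xs assume "xs \<in> sorted_args so ` ?F"
      then obtain a where a: "is_factor a" "fn_depth a < Suc k" and xs: "xs = sorted_args so a" by blast
      show "xs \<in> lists {a. is_factor a \<and> fn_depth a < k}"
      proof (cases a)
        case (Fn f t)
        then show ?thesis
          using a xs factor_prod_leaf[of t] fn_depth_prod_leaf[of _ t] by fastforce
      qed (use xs in simp_all)
    qed
    then have "total_preorder_on (sorted_args so ` ?F) (lex_ge (ge_l so))"
      by (rule total_preorder_on_subset[OF total_preorder_on_lists[OF Suc.IH]])
    then show ?case
      by (rule total_preorder_on_lexicographic[OF lin]) (simp add: ge_l_factor_iff[OF refl])
  qed
  have triple: "total_preorder_on {x, y, z} (ge_l so)" if "is_factor x" "is_factor y" "is_factor z" for x y z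
    by (rule total_preorder_on_subset[OF bounded[of "Suc (fn_depth x + fn_depth y + fn_depth z)"]])
      (use that in auto)
  show ?thesis
    unfolding total_preorder_on_def transp_on_def
  proof (intro conjI ballI allI impI)
    fix x y :: "('c, 'v, 'f) trm" assume "x \<in> {a. is_factor a}" "y \<in> {a. is_factor a}"
    then show "ge_l so x y \<or> ge_l so y x"
      using triple[of x y y] unfolding total_preorder_on_def by simp
  next
    fix x y z :: "('c, 'v, 'f) trm" assume "x \<in> {a. is_factor a}" "y \<in> {a. is_factor a}" "z \<in> {a. is_factor a}"
      and "ge_l so x y" "ge_l so y z"
    then show "ge_l so x z"
      using triple[of x y z] unfolding total_preorder_on_def transp_on_def by blast
  qed
qed

lemma ge_p_total_preorder_on_monomials:
  fixes so :: "('c::zero, 'v, 'f) sym rel"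
  assumes "linear_order_on UNIV so"
  shows "total_preorder_on {m :: ('c::zero, 'v, 'f) trm. is_monomial m} (ge_p so)"
proof -
  let ?g = "\<lambda>m :: ('c, 'v, 'f) trm. sort_by (ge_l so) (prod_leaves m)"
  have "?g ` {m. is_monomial m} \<subseteq> lists {a. is_factor a}"
    by (auto simp: is_monomial_def)
  then have "total_preorder_on (?g ` {m. is_monomial m}) (lex_ge (ge_l so))"
    by (rule total_preorder_on_subset[OF total_preorder_on_lists[OF ge_l_total_preorder_on_factors[OF assms]]])
  then show ?thesis
    unfolding ge_p_def by (rule total_preorder_on_inv_image)
qed

lemma gel_fuel_flat: "gel_fuel so n (flat a) (flat b) = gel_fuel so n a b"
proof (induction n arbitrary: a b)
  case (Suc k)
  have sort: "sort_by (gel_fuel so k) (map flat xs) = map flat (sort_by (gel_fuel so k) xs)" for xs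
    by (rule sort_by_map) (rule Suc.IH)
  have lex: "lex_ge (gel_fuel so k) (map flat xs) (map flat ys) = lex_ge (gel_fuel so k) xs ys" for xs ys
    by (rule lex_ge_map) (rule Suc.IH)
  show ?case
  proof (cases "is_add a \<or> is_mul a \<or> is_add b \<or> is_mul b")
    case True
    have "gel_fuel so (Suc k) x y = False" if "is_add x \<or> is_mul x \<or> is_add y \<or> is_mul y" for x y
      using that by (cases x; cases y) auto
    then show ?thesis using True by simp
  next
    case False
    then show ?thesis by (cases a; cases b) (auto simp: prod_leaves_flat sort lex)
  qed
qed simp

lemma ge_l_flat [simp]: "ge_l so (flat a) (flat b) = ge_l so a b"
  unfolding ge_l_def by (simp add: gel_fuel_flat)

lemma ge_p_flat [simp]: "ge_p so (flat a) (flat b) = ge_p so a b"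
proof -
  have "sort_by (ge_l so) (map flat xs) = map flat (sort_by (ge_l so) xs)" for xs
    by (rule sort_by_map) (rule ge_l_flat)
  moreover have "lex_ge (ge_l so) (map flat xs) (map flat ys) = lex_ge (ge_l so) xs ys" for xs ys
    by (rule lex_ge_map) (rule ge_l_flat)
  ultimately show ?thesis unfolding ge_p_def prod_leaves_flat by simp
qed

section \<open>The termination measures\<close>

fun weight :: "('c, 'v, 'f) trm \<Rightarrow> nat" where
  "weight (Cst _) = 3"
| "weight (Var _) = 3"
| "weight (Add a b) = weight a + weight b + 1"
| "weight (Mul a b) = weight a * weight b"
| "weight (Fn _ t) = 2 ^ weight t"

lemma weight_ge_3: "3 \<le> weight t"
proof (induction t)
  case (Mul a b)
  then have "3 * 1 \<le> weight a * weight b" by (intro mult_mono) auto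
  then show ?case by simp
next
  case (Fn f t)
  have "(2::nat) ^ 3 \<le> 2 ^ weight t" using Fn by (intro power_increasing) auto
  then show ?case by simp
qed auto

lemma weight_aeq: "aeq s t \<Longrightarrow> weight s = weight t"
  by (induction rule: aeq.induct) (auto simp: algebra_simps)

lemma prod_list_map_perm:
  fixes f :: "'a \<Rightarrow> 'b::comm_monoid_mult"
  assumes "mset xs = mset ys"
  shows "prod_list (map f xs) = prod_list (map f ys)"
proof -
  have "prod_list (map f xs) = prod_mset (mset (map f xs))" by (rule prod_mset_prod_list[symmetric])
  also have "\<dots> = prod_mset (mset (map f ys))" using assms by simp
  also have "\<dots> = prod_list (map f ys)" by (rule prod_mset_prod_list)
  finally show ?thesis .
qed

lemma weight_sum_leaves: "weight t + 1 = (\<Sum>l\<leftarrow>sum_leaves t. weight l + 1)"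
  by (induction t rule: sum_leaves.induct) auto

lemma weight_prod_leaves: "weight t = (\<Prod>l\<leftarrow>prod_leaves t. weight l)"
  by (induction t rule: prod_leaves.induct) auto

lemma weight_eq_if_perm_sum_leaves:
  "mset (sum_leaves s) = mset (sum_leaves t) \<Longrightarrow> weight s = weight t"
  using weight_sum_leaves[of s] weight_sum_leaves[of t]
    sum_list_map_perm[of "sum_leaves s" "sum_leaves t" "\<lambda>l. weight l + 1"]
  by simp

lemma weight_eq_if_perm_prod_leaves:
  "mset (prod_leaves s) = mset (prod_leaves t) \<Longrightarrow> weight s = weight t"
  using weight_prod_leaves[of s] weight_prod_leaves[of t]
    prod_list_map_perm[of "prod_leaves s" "prod_leaves t" weight]
  by simp

lemma weight_R12_less:
  assumes "3 \<le> a" and "3 \<le> b"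
  shows "(2::nat) ^ a + 2 ^ b + 1 + 3 + 1 < 2 ^ (a + b + 1)"
proof -
  have a: "(8::nat) \<le> 2 ^ a" and b: "(8::nat) \<le> 2 ^ b"
    using power_increasing[of 3 _ "2::nat"] assms by simp_all
  have "(2::nat) ^ a * 8 \<le> 2 ^ a * 2 ^ b" using b by simp
  moreover have "(2::nat) ^ b * 8 \<le> 2 ^ a * 2 ^ b" using a by simp
  moreover have "(2::nat) ^ (a + b + 1) = 2 * (2 ^ a * 2 ^ b)" by (simp add: power_add)
  ultimately show ?thesis using a b by linarith
qed

function inversion_depths :: "('c, 'v, 'f) sym rel \<Rightarrow> ('c, 'v, 'f) trm \<Rightarrow> nat multiset" where
  "inversion_depths so (Add a b) =
     image_mset Suc (\<Sum>l\<leftarrow>sum_leaves (Add a b). inversion_depths so l)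
     + replicate_mset (inversions (ge_p so) (sum_leaves (Add a b))) 0"
| "inversion_depths so (Mul a b) =
     image_mset Suc (\<Sum>l\<leftarrow>prod_leaves (Mul a b). inversion_depths so l)
     + replicate_mset (inversions (ge_l so) (prod_leaves (Mul a b))) 0"
| "inversion_depths so (Fn f t) = inversion_depths so t"
| "inversion_depths so (Cst c) = {#}"
| "inversion_depths so (Var v) = {#}"
  by pat_completeness auto
termination
  by (relation "measure (\<lambda>(so, t). size t)") (auto dest: size_sum_leaf size_prod_leaf)

lemma inversion_depths_add:
  "is_add t \<Longrightarrow> inversion_depths so t =
     image_mset Suc (\<Sum>l\<leftarrow>sum_leaves t. inversion_depths so l)
     + replicate_mset (inversions (ge_p so) (sum_leaves t)) 0"
  by (cases t) simp_all

lemma inversion_depths_mul: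
  "is_mul t \<Longrightarrow> inversion_depths so t =
     image_mset Suc (\<Sum>l\<leftarrow>prod_leaves t. inversion_depths so l)
     + replicate_mset (inversions (ge_l so) (prod_leaves t)) 0"
  by (cases t) simp_all

lemma inversion_depths_flat: "inversion_depths so (flat t) = inversion_depths so t"
proof (induction so t rule: inversion_depths.induct)
  case (1 so a b)
  let ?xs = "sum_leaves (Add a b)"
  have sums: "(\<Sum>l\<leftarrow>?xs. inversion_depths so (flat l)) = (\<Sum>l\<leftarrow>?xs. inversion_depths so l)"
    using "1.IH" by (intro arg_cong[of _ _ sum_list] map_cong) auto
  have invs: "inversions (ge_p so) (map flat ?xs) = inversions (ge_p so) ?xs"
    by (rule inversions_map) (rule ge_p_flat)
  have "is_add (flat (Add a b))" by (simp only: is_add_flat is_add.simps)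
  then have "inversion_depths so (flat (Add a b)) =
      image_mset Suc (\<Sum>l\<leftarrow>sum_leaves (flat (Add a b)). inversion_depths so l)
      + replicate_mset (inversions (ge_p so) (sum_leaves (flat (Add a b)))) 0"
    by (rule inversion_depths_add)
  also have "\<dots> = image_mset Suc (\<Sum>l\<leftarrow>?xs. inversion_depths so (flat l))
      + replicate_mset (inversions (ge_p so) (map flat ?xs)) 0"
    by (simp only: sum_leaves_flat map_map o_def)
  also have "\<dots> = inversion_depths so (Add a b)"
    by (simp only: sums invs inversion_depths.simps(1))
  finally show ?case .
next
  case (2 so a b)
  let ?xs = "prod_leaves (Mul a b)"
  have sums: "(\<Sum>l\<leftarrow>?xs. inversion_depths so (flat l)) = (\<Sum>l\<leftarrow>?xs. inversion_depths so l)"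
    using "2.IH" by (intro arg_cong[of _ _ sum_list] map_cong) auto
  have invs: "inversions (ge_l so) (map flat ?xs) = inversions (ge_l so) ?xs"
    by (rule inversions_map) (rule ge_l_flat)
  have "is_mul (flat (Mul a b))" by (simp only: is_mul_flat is_mul.simps)
  then have "inversion_depths so (flat (Mul a b)) =
      image_mset Suc (\<Sum>l\<leftarrow>prod_leaves (flat (Mul a b)). inversion_depths so l)
      + replicate_mset (inversions (ge_l so) (prod_leaves (flat (Mul a b)))) 0"
    by (rule inversion_depths_mul)
  also have "\<dots> = image_mset Suc (\<Sum>l\<leftarrow>?xs. inversion_depths so (flat l))
      + replicate_mset (inversions (ge_l so) (map flat ?xs)) 0"
    by (simp only: prod_leaves_flat map_map o_def)
  also have "\<dots> = inversion_depths so (Mul a b)"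
    by (simp only: sums invs inversion_depths.simps(2))
  finally show ?case .
qed simp_all

lemma inversion_depths_aeq: "aeq s t \<Longrightarrow> inversion_depths so s = inversion_depths so t"
  by (metis flat_aeq inversion_depths_flat)

lemma image_mset_Suc_plus_zeros_less:
  fixes A B :: "nat multiset"
  assumes "A < B"
  shows "image_mset Suc A + replicate_mset k 0 < image_mset Suc B + replicate_mset l 0"
proof -
  define L R where "L = image_mset Suc A + replicate_mset k 0"
    and "R = image_mset Suc B + replicate_mset l 0"
  have count_Suc: "count (image_mset Suc M) (Suc y) = count M y" for M y
    by (induction M) auto
  obtain z where z: "count A z < count B z"
    using lt_imp_ex_count_lt[OF assms] by blast
  then have "count L (Suc z) \<noteq> count R (Suc z)"
    by (simp add: L_def R_def count_Suc)
  then have "L \<noteq> R" by auto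
  moreover have "\<exists>x>y. count L x < count R x" if "count R y < count L y" for y
  proof (cases y)
    case 0
    then show ?thesis using z by (intro exI[of _ "Suc z"]) (simp add: L_def R_def count_Suc)
  next
    case (Suc y')
    then have "count B y' < count A y'" using that by (simp add: L_def R_def count_Suc)
    then obtain x where "y' < x" "count A x < count B x"
      using assms unfolding less_multiset\<^sub>H\<^sub>O by blast
    then show ?thesis using Suc by (intro exI[of _ "Suc x"]) (simp add: L_def R_def count_Suc)
  qed
  ultimately have "L < R" unfolding less_multiset\<^sub>H\<^sub>O by blast
  then show ?thesis by (simp add: L_def R_def)
qed

definition leaf_descent :: "('c, 'v, 'f) sym rel \<Rightarrow> (('c, 'v, 'f) trm \<Rightarrow> ('c, 'v, 'f) trm \<Rightarrow> bool) \<Rightarrow>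
    ('c, 'v, 'f) trm list \<Rightarrow> ('c, 'v, 'f) trm list \<Rightarrow> bool" where
  "leaf_descent so ge xs ys \<longleftrightarrow>
     (\<Sum>l\<leftarrow>ys. inversion_depths so l) < (\<Sum>l\<leftarrow>xs. inversion_depths so l) \<or>
     (mset ys = mset xs \<and> inversions ge ys < inversions ge xs)"

lemma leaf_descent_singleton [simp]:
  "leaf_descent so ge [s] [t] \<longleftrightarrow> inversion_depths so t < inversion_depths so s"
  by (auto simp: leaf_descent_def)

lemma leaf_descent_node_less:
  assumes "leaf_descent so ge xs ys"
  shows "image_mset Suc (\<Sum>l\<leftarrow>ys. inversion_depths so l) + replicate_mset (inversions ge ys) 0
       < image_mset Suc (\<Sum>l\<leftarrow>xs. inversion_depths so l) + replicate_mset (inversions ge xs) 0"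
proof (cases "(\<Sum>l\<leftarrow>ys. inversion_depths so l) < (\<Sum>l\<leftarrow>xs. inversion_depths so l)")
  case True
  then show ?thesis by (rule image_mset_Suc_plus_zeros_less)
next
  case False
  then have perm: "mset ys = mset xs" and less: "inversions ge ys < inversions ge xs"
    using assms by (auto simp: leaf_descent_def)
  obtain d where d: "inversions ge xs = Suc (inversions ge ys + d)"
    using less_imp_Suc_add[OF less] by blast
  let ?C = "image_mset Suc (\<Sum>l\<leftarrow>xs. inversion_depths so l) + replicate_mset (inversions ge ys) 0"
  have "image_mset Suc (\<Sum>l\<leftarrow>ys. inversion_depths so l) + replicate_mset (inversions ge ys) 0 = ?C"
    using sum_list_map_perm[OF perm, of "inversion_depths so"] by simp
  moreover have "image_mset Suc (\<Sum>l\<leftarrow>xs. inversion_depths so l) + replicate_mset (inversions ge xs) 0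
      = ?C + replicate_mset (Suc d) 0"
    using d by (simp add: multiset_eq_iff)
  moreover have "?C < ?C + replicate_mset (Suc d) 0"
    by (rule le_multiset_plus_right_nonempty) simp
  ultimately show ?thesis by simp
qed

lemma leaf_descent_append:
  assumes "leaf_descent so ge xs ys"
  shows leaf_descent_append_right: "leaf_descent so ge (xs @ zs) (ys @ zs)"
    and leaf_descent_append_left: "leaf_descent so ge (zs @ xs) (zs @ ys)"
  using assms cross_inversions_perm[of ys xs zs zs ge] cross_inversions_perm[of zs zs ys xs ge]
  by (auto simp: leaf_descent_def inversions_append)

text \<open>
  The effect of a sorting step, in a form that survives putting the redex as a summand or
  factor into a larger flat sum or product: both flat views of the term descend.
\<close>

definition sort_descent :: "('c, 'v, 'f) sym rel \<Rightarrow> ('c, 'v, 'f) trm \<Rightarrow> ('c, 'v, 'f) trm \<Rightarrow> bool" where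
  "sort_descent so s t \<longleftrightarrow> is_add t = is_add s \<and> is_mul t = is_mul s \<and>
     leaf_descent so (ge_p so) (sum_leaves s) (sum_leaves t) \<and>
     leaf_descent so (ge_l so) (prod_leaves s) (prod_leaves t)"

lemma sort_descent_less:
  assumes "sort_descent so s t"
  shows "inversion_depths so t < inversion_depths so s"
proof -
  consider "is_add s" | "is_mul s" | "\<not> is_add s" "\<not> is_mul s" by blast
  then show ?thesis
  proof cases
    case 1
    then show ?thesis using assms leaf_descent_node_less[of so "ge_p so" "sum_leaves s" "sum_leaves t"]
      by (simp add: sort_descent_def inversion_depths_add)
  next
    case 2
    then show ?thesis using assms leaf_descent_node_less[of so "ge_l so" "prod_leaves s" "prod_leaves t"]
      by (simp add: sort_descent_def inversion_depths_mul)
  next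
    case 3
    then show ?thesis using assms by (auto simp: sort_descent_def sum_leaves_non_add)
  qed
qed

lemma sort_descent_addI:
  assumes "is_add s" and "is_add t" and "leaf_descent so (ge_p so) (sum_leaves s) (sum_leaves t)"
  shows "sort_descent so s t"
proof -
  have "\<not> is_mul s" "\<not> is_mul t" using assms(1,2) by (cases s; cases t; simp)+
  then show ?thesis
    using assms leaf_descent_node_less[OF assms(3)]
    by (simp add: sort_descent_def prod_leaves_non_mul inversion_depths_add)
qed

lemma sort_descent_mulI:
  assumes "is_mul s" and "is_mul t" and "leaf_descent so (ge_l so) (prod_leaves s) (prod_leaves t)"
  shows "sort_descent so s t"
proof -
  have "\<not> is_add s" "\<not> is_add t" using assms(1,2) by (cases s; cases t; simp)+
  then show ?thesis
    using assms leaf_descent_node_less[OF assms(3)]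
    by (simp add: sort_descent_def sum_leaves_non_add inversion_depths_mul)
qed

lemma sort_descent_Add:
  assumes "sort_descent so s t"
  shows sort_descent_Add1: "sort_descent so (Add s u) (Add t u)"
    and sort_descent_Add2: "sort_descent so (Add u s) (Add u t)"
proof -
  have "leaf_descent so (ge_p so) (sum_leaves s) (sum_leaves t)"
    using assms by (simp add: sort_descent_def)
  then show "sort_descent so (Add s u) (Add t u)" "sort_descent so (Add u s) (Add u t)"
    by (simp_all add: sort_descent_addI leaf_descent_append)
qed

lemma sort_descent_Mul:
  assumes "sort_descent so s t"
  shows sort_descent_Mul1: "sort_descent so (Mul s u) (Mul t u)"
    and sort_descent_Mul2: "sort_descent so (Mul u s) (Mul u t)"
proof -
  have "leaf_descent so (ge_l so) (prod_leaves s) (prod_leaves t)"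
    using assms by (simp add: sort_descent_def)
  then show "sort_descent so (Mul s u) (Mul t u)" "sort_descent so (Mul u s) (Mul u t)"
    by (simp_all add: sort_descent_mulI leaf_descent_append)
qed

lemma sort_descent_Fn: "sort_descent so s t \<Longrightarrow> sort_descent so (Fn f s) (Fn f t)"
  using sort_descent_less[of so s t] by (simp add: sort_descent_def)

definition descends :: "('c, 'v, 'f) sym rel \<Rightarrow> ('c, 'v, 'f) trm \<Rightarrow> ('c, 'v, 'f) trm \<Rightarrow> bool" where
  "descends so s t \<longleftrightarrow> weight t < weight s \<or> (weight t = weight s \<and> sort_descent so s t)"

lemma descends_Add:
  assumes "descends so s t"
  shows descends_Add1: "descends so (Add s u) (Add t u)"
    and descends_Add2: "descends so (Add u s) (Add u t)"
  using assms by (auto simp: descends_def sort_descent_Add)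

lemma descends_Mul:
  assumes "descends so s t"
  shows descends_Mul1: "descends so (Mul s u) (Mul t u)"
    and descends_Mul2: "descends so (Mul u s) (Mul u t)"
  using assms weight_ge_3[of u] by (auto simp: descends_def sort_descent_Mul)

lemma descends_Fn: "descends so s t \<Longrightarrow> descends so (Fn f s) (Fn f t)"
  by (auto simp: descends_def sort_descent_Fn)

lemma R1_descends:
  assumes lin: "linear_order_on UNIV so"
    and monomials: "\<forall>m\<in>set (sum_leaves t). is_monomial m"
    and unsorted: "sort_by (ge_p so) (sum_leaves t) \<noteq> sum_leaves t"
  shows "descends so t (mk_add (sort_by (ge_p so) (sum_leaves t)))"
proof -
  let ?ys = "sort_by (ge_p so) (sum_leaves t)"
  have long: "2 \<le> length (sum_leaves t)" "2 \<le> length ?ys"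
    using sort_by_length_ge_2[OF unsorted] by (simp_all flip: size_mset)
  have leaves: "sum_leaves (mk_add ?ys) = ?ys"
    using long(2) by (intro sum_leaves_mk_add) (auto dest: non_add_sum_leaf)
  have "is_add t" "is_add (mk_add ?ys)"
    using long leaves by (simp_all add: is_add_if_long_sum_leaves)
  moreover have "total_preorder_on (set (sum_leaves t)) (ge_p so)"
    by (rule total_preorder_on_subset[OF ge_p_total_preorder_on_monomials[OF lin]]) (use monomials in auto)
  then have "inversions (ge_p so) ?ys < inversions (ge_p so) (sum_leaves t)"
    using unsorted by (rule inversions_sort_by_less)
  ultimately have "sort_descent so t (mk_add ?ys)"
    by (intro sort_descent_addI) (simp_all add: leaf_descent_def leaves)
  moreover have "weight (mk_add ?ys) = weight t"
    by (rule weight_eq_if_perm_sum_leaves) (simp add: leaves)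
  ultimately show ?thesis by (simp add: descends_def)
qed

lemma R2_descends:
  assumes lin: "linear_order_on UNIV so"
    and factors: "\<forall>a\<in>set (prod_leaves t). is_factor a"
    and unsorted: "sort_by (ge_l so) (prod_leaves t) \<noteq> prod_leaves t"
  shows "descends so t (mk_mul (sort_by (ge_l so) (prod_leaves t)))"
proof -
  let ?ys = "sort_by (ge_l so) (prod_leaves t)"
  have long: "2 \<le> length (prod_leaves t)" "2 \<le> length ?ys"
    using sort_by_length_ge_2[OF unsorted] by (simp_all flip: size_mset)
  have leaves: "prod_leaves (mk_mul ?ys) = ?ys"
    using long(2) by (intro prod_leaves_mk_mul) (auto dest: non_mul_prod_leaf)
  have "is_mul t" "is_mul (mk_mul ?ys)"
    using long leaves by (simp_all add: is_mul_if_long_prod_leaves)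
  moreover have "total_preorder_on (set (prod_leaves t)) (ge_l so)"
    by (rule total_preorder_on_subset[OF ge_l_total_preorder_on_factors[OF lin]]) (use factors in auto)
  then have "inversions (ge_l so) ?ys < inversions (ge_l so) (prod_leaves t)"
    using unsorted by (rule inversions_sort_by_less)
  ultimately have "sort_descent so t (mk_mul ?ys)"
    by (intro sort_descent_mulI) (simp_all add: leaf_descent_def leaves)
  moreover have "weight (mk_mul ?ys) = weight t"
    by (rule weight_eq_if_perm_prod_leaves) (simp add: leaves)
  ultimately show ?thesis by (simp add: descends_def)
qed

lemma root_step_descends:
  assumes "linear_order_on UNIV so" and "root_step so cf s t"
  shows "descends so s t"
  using assms(2)
proof cases
  case R1
  then show ?thesis using R1_descends[OF assms(1)] by blast
next
  case R2
  then show ?thesis using R2_descends[OF assms(1)] by blast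
next
  case (R3 x)
  with weight_ge_3[of x] show ?thesis by (simp add: descends_def)
next
  case (R4 x)
  with weight_ge_3[of x] show ?thesis by (simp add: descends_def)
next
  case (R5 x)
  with weight_ge_3[of x] show ?thesis by (simp add: descends_def)
next
  case R8
  with weight_ge_3[of t] show ?thesis by (simp add: descends_def)
next
  case R9
  with weight_ge_3[of t] show ?thesis by (simp add: descends_def)
next
  case (R10 x y z)
  with weight_ge_3[of z] show ?thesis by (simp add: descends_def algebra_simps)
next
  case (R11 x y z)
  with weight_ge_3[of x] show ?thesis by (simp add: descends_def algebra_simps)
next
  case (R12 f x y)
  with weight_R12_less[OF weight_ge_3[of x] weight_ge_3[of y]] show ?thesis
    by (simp add: descends_def)
qed (simp_all add: descends_def)

lemma ctx_step_descends:
  assumes "linear_order_on UNIV so"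
  shows "ctx_step so cf s t \<Longrightarrow> descends so s t"
  by (induction rule: ctx_step.induct)
    (auto intro: root_step_descends[OF assms] descends_Add descends_Mul descends_Fn)

lemma rstep_measure_less:
  assumes "linear_order_on UNIV so" and "rstep so cf s t"
  shows "((weight t, inversion_depths so t), (weight s, inversion_depths so s))
    \<in> less_than <*lex*> {(M, N). M < N}"
proof -
  obtain s' t' where "aeq s s'" "ctx_step so cf s' t'" "aeq t' t"
    using assms(2) unfolding rstep_def by blast
  moreover have "descends so s' t'"
    using ctx_step_descends[OF assms(1)] \<open>ctx_step so cf s' t'\<close> .
  ultimately show ?thesis
    using sort_descent_less[of so s' t']
    by (auto simp: descends_def weight_aeq inversion_depths_aeq)
qed

theorem lemma2:
  fixes so :: "('c::field, 'v, 'f::finite) sym rel" and cf :: "'f \<Rightarrow> 'c" and n :: nat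
  assumes "finite (UNIV :: 'c set)" and "card (UNIV :: 'c set) = 2 ^ n"
    and "linear_order_on UNIV so"
  shows "\<forall>\<tau>. \<not> (\<exists>S. S 0 = \<tau> \<and> (\<forall>i. rstep so cf (S i) (S (Suc i))))"
proof (intro allI notI)
  fix \<tau> :: "('c, 'v, 'f) trm"
  assume "\<exists>S. S 0 = \<tau> \<and> (\<forall>i. rstep so cf (S i) (S (Suc i)))"
  then obtain S where steps: "\<forall>i. rstep so cf (S i) (S (Suc i))" by blast
  let ?\<mu> = "\<lambda>t. (weight t, inversion_depths so t)"
  have "wf (less_than <*lex*> {(M, N :: nat multiset). M < N})"
    by (intro wf_lex_prod wf_less_than wf_less_multiset)
  moreover have "((?\<mu> \<circ> S) (Suc i), (?\<mu> \<circ> S) i) \<in> less_than <*lex*> {(M, N). M < N}" for i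
    unfolding o_def by (rule rstep_measure_less[OF assms(3) steps[rule_format]])
  ultimately show False
    unfolding wf_iff_no_infinite_down_chain by blast
qed

end
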